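(* Let $T\ge1$ and $N \ge T + \lfloor T^2/4\rfloor + 2$. In the polytope-code decoding setting described in the context, the set $V^*$ satisfies $|V^*| \ge N - T - \lfloor T^2/4\rfloor - 1$, and $\bar y_i = y_i$ for every $v_i\in V^*$. That is, the decoder identifies at least $N - T - \lfloor T^2/4 \rfloor - 1$ packets as received correctly, and all packets so identified are indeed correct.
   Context: Let $N_0\ge1$. An eligible $(N,N-T)$-generator matrix is an $N\times(N-T)$ matrix $A=(A_{ij})$ with nonnegative integer entries whose first $N-T$ rows form the identity matrix and such that every $(N-T)\times(N-T)$ submatrix obtained by choosing $N-T$ rows is nonsingular. Given $x_1,\dots,x_{N-T}\in\mathbb{Z}^{N_0}$, the transmitted codewords are $y_i = \sum_{j=1}^{N-T} A_{ij} x_j$, $i\in[N]$. The decoder receives $\bar y_1,\dots,\bar y_N\in\mathbb{Z}^{N_0}$ with $\bar y_i = y_i$ for all $i$ outside some unknown set of at most $T$ indices, and knows exactly $F_{ij}=\langle y_i,y_j\rangle$ for all $i,j\in[N]$ (in the code, the inner products $\langle x_i,x_j\rangle$ are included in every packet and recovered by majority). The syndrome graph $G$ has vertices $v_1,\dots,v_N$; for $i\ne j$, $v_i$ and $v_j$ are adjacent iff $\langle\bar y_i,\bar y_j\rangle=F_{ij}$; $v_i$ has a self-loop iff $\langle\bar y_i,\bar y_i\rangle = F_{ii}$. $\hat G$ is $G$ with all vertices lacking a self-loop deleted. $V'$ is the set of vertices of $\hat G$ lying in a clique (pairwise adjacent distinct vertices) of size at least $N-T$ in $\hat G$. $V^*$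 is the set of $v_i\in V'$ adjacent in $\hat G$ to every vertex of $V'$ (including itself via its self-loop). *)

theory Defs
  imports Main "Jordan_Normal_Form.Determinant"
begin

text \<open>Vectors in Z^N0 are represented as functions nat => int; only the components
  k < N0 are relevant. Indices of packets are 0..N-1, message indices 0..N-T-1.\<close>

definition ip :: "nat \<Rightarrow> (nat \<Rightarrow> int) \<Rightarrow> (nat \<Rightarrow> int) \<Rightarrow> int" where
  "ip N0 u v = (\<Sum>k<N0. u k * v k)"

definition row_submatrix :: "(nat \<Rightarrow> nat \<Rightarrow> int) \<Rightarrow> nat \<Rightarrow> nat set \<Rightarrow> int mat" where
  "row_submatrix A K S = mat K K (\<lambda>(r, c). A (sorted_list_of_set S ! r) c)"

definition eligible_generator :: "nat \<Rightarrow> nat \<Rightarrow> (nat \<Rightarrow> nat \<Rightarrow> int) \<Rightarrow> bool" where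
  "eligible_generator N T A \<longleftrightarrow>
     T \<le> N \<and>
     (\<forall>i<N. \<forall>j<N - T. A i j \<ge> 0) \<and>
     (\<forall>i<N - T. \<forall>j<N - T. A i j = (if i = j then 1 else 0)) \<and>
     (\<forall>S. S \<subseteq> {..<N} \<and> card S = N - T \<longrightarrow> det (row_submatrix A (N - T) S) \<noteq> 0)"

definition codeword :: "nat \<Rightarrow> (nat \<Rightarrow> nat \<Rightarrow> int) \<Rightarrow> (nat \<Rightarrow> nat \<Rightarrow> int) \<Rightarrow> nat \<Rightarrow> nat \<Rightarrow> int" where
  "codeword K A x i = (\<lambda>k. \<Sum>j<K. A i j * x j k)"

text \<open>Syndrome graph: adjacency (for i \<noteq> j) / self-loop (for i = j).\<close>
definition sadj :: "nat \<Rightarrow> (nat \<Rightarrow> nat \<Rightarrow> int) \<Rightarrow> (nat \<Rightarrow> nat \<Rightarrow> int) \<Rightarrow> nat \<Rightarrow> nat \<Rightarrow> bool" where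
  "sadj N0 y ybar i j \<longleftrightarrow> ip N0 (ybar i) (ybar j) = ip N0 (y i) (y j)"

definition hatV :: "nat \<Rightarrow> nat \<Rightarrow> (nat \<Rightarrow> nat \<Rightarrow> int) \<Rightarrow> (nat \<Rightarrow> nat \<Rightarrow> int) \<Rightarrow> nat set" where
  "hatV N N0 y ybar = {i. i < N \<and> sadj N0 y ybar i i}"

definition is_clique :: "nat \<Rightarrow> nat \<Rightarrow> (nat \<Rightarrow> nat \<Rightarrow> int) \<Rightarrow> (nat \<Rightarrow> nat \<Rightarrow> int) \<Rightarrow> nat set \<Rightarrow> bool" where
  "is_clique N N0 y ybar C \<longleftrightarrow> C \<subseteq> hatV N N0 y ybar \<and>
     (\<forall>i\<in>C. \<forall>j\<in>C. i \<noteq> j \<longrightarrow> sadj N0 y ybar i j)"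

definition Vprime :: "nat \<Rightarrow> nat \<Rightarrow> nat \<Rightarrow> (nat \<Rightarrow> nat \<Rightarrow> int) \<Rightarrow> (nat \<Rightarrow> nat \<Rightarrow> int) \<Rightarrow> nat set" where
  "Vprime N T N0 y ybar = {i \<in> hatV N N0 y ybar.
     \<exists>C. is_clique N N0 y ybar C \<and> card C \<ge> N - T \<and> i \<in> C}"

definition Vstar :: "nat \<Rightarrow> nat \<Rightarrow> nat \<Rightarrow> (nat \<Rightarrow> nat \<Rightarrow> int) \<Rightarrow> (nat \<Rightarrow> nat \<Rightarrow> int) \<Rightarrow> nat set" where
  "Vstar N T N0 y ybar = {i \<in> Vprime N T N0 y ybar.
     \<forall>j \<in> Vprime N T N0 y ybar. sadj N0 y ybar i j}"

end

theory Submission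
  imports Defs
begin

text \<open>Call a packet good if it was received correctly. The good packets form a clique of
  size at least \<open>N - T\<close> in \<open>hat G\<close>, so they all lie in \<open>V'\<close>. A vertex \<open>i\<close> with a self-loop that
  is adjacent to \<open>N - T\<close> good packets is itself good: its error \<open>z = ybar\<^sub>i - y\<^sub>i\<close> is orthogonal
  to \<open>N - T\<close> codewords, hence, as every \<open>N - T\<close> rows of the generator are nonsingular, to every
  message and so to \<open>y\<^sub>i\<close>; the self-loop then forces \<open>|z|\<^sup>2 = 0\<close>. Hence \<open>V\<^sup>*\<close> consists of good
  packets, and every bad vertex \<open>c \<in> V'\<close> misses at least \<open>T - |bad| + 1\<close> good packets. A good
  packet outside \<open>V\<^sup>*\<close> is missed by such a \<open>c\<close>. The missed packets are counted greedily: the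
  bad members \<open>D(c)\<close> of a clique through \<open>c\<close> miss only good packets outside that clique, at most
  \<open>T - |bad| + |D(c)|\<close> of them; charging each step to the bad vertices it removes and an AM-GM
  estimate bound the total by \<open>T - |bad| + 1 + \<lfloor>T\<^sup>2/4\<rfloor>\<close>.\<close>

lemma ip_commute: "ip N0 u v = ip N0 v u"
  unfolding ip_def by (simp add: mult.commute)

lemma ip_cong:
  assumes "\<forall>k<N0. u k = u' k" "\<forall>k<N0. v k = v' k"
  shows "ip N0 u v = ip N0 u' v'"
  unfolding ip_def using assms by (auto intro: sum.cong)

lemma ip_diff_left: "ip N0 (\<lambda>k. u k - v k) w = ip N0 u w - ip N0 v w"
  unfolding ip_def by (simp add: sum_subtractf left_diff_distrib)

lemma ip_self_eq_0_imp_zero: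
  assumes "ip N0 z z = 0"
  shows "\<forall>k<N0. z k = 0"
proof -
  have "\<forall>k\<in>{..<N0}. z k * z k = 0"
    using assms unfolding ip_def by (subst sum_nonneg_eq_0_iff[symmetric]) auto
  then show ?thesis by simp
qed

lemma ip_codeword: "ip N0 z (codeword K A x i) = (\<Sum>j<K. A i j * ip N0 z (x j))"
proof -
  have "ip N0 z (codeword K A x i) = (\<Sum>k<N0. \<Sum>j<K. A i j * (z k * x j k))"
    unfolding ip_def codeword_def by (simp add: sum_distrib_left mult_ac)
  also have "\<dots> = (\<Sum>j<K. A i j * ip N0 z (x j))"
    unfolding ip_def by (subst sum.swap) (simp add: sum_distrib_left)
  finally show ?thesis .
qed

lemma sadj_commute: "sadj N0 y ybar i j = sadj N0 y ybar j i"
  unfolding sadj_def by (simp add: ip_commute)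

lemma orthogonal_codewords_imp_orthogonal_messages:
  assumes elig: "eligible_generator N T A"
    and S: "S \<subseteq> {..<N}" "card S = N - T"
    and orth: "\<forall>h\<in>S. ip N0 z (codeword (N - T) A x h) = 0"
    and j: "j < N - T"
  shows "ip N0 z (x j) = 0"
proof -
  let ?K = "N - T"
  let ?R = "row_submatrix A ?K S"
  let ?l = "sorted_list_of_set S"
  define v where "v = vec ?K (\<lambda>j. ip N0 z (x j))"
  have R: "?R \<in> carrier_mat ?K ?K" unfolding row_submatrix_def by simp
  have "det ?R \<noteq> 0" using elig S unfolding eligible_generator_def by blast
  then have injective: "\<not> (\<exists>w. w \<in> carrier_vec ?K \<and> w \<noteq> 0\<^sub>v ?K \<and> ?R *\<^sub>v w = 0\<^sub>v ?K)"
    using det_0_iff_vec_prod_zero[OF R] by simp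
  have "finite S" using S(1) finite_subset by blast
  then have row_in_S: "?l ! r \<in> S" if "r < ?K" for r
    using that S(2) nth_mem[of r ?l] by simp
  have "?R *\<^sub>v v = 0\<^sub>v ?K"
  proof (rule eq_vecI)
    fix r assume "r < dim_vec (0\<^sub>v ?K :: int vec)"
    then have r: "r < ?K" by simp
    have "(?R *\<^sub>v v) $ r = ip N0 z (codeword ?K A x (?l ! r))"
      using r unfolding row_submatrix_def v_def
      by (simp add: scalar_prod_def row_def atLeast0LessThan ip_codeword)
    then show "(?R *\<^sub>v v) $ r = 0\<^sub>v ?K $ r" using orth row_in_S[OF r] r by simp
  qed (simp add: row_submatrix_def)
  then have "v = 0\<^sub>v ?K" using injective unfolding v_def by (metis vec_carrier)
  then show ?thesis using j unfolding v_def by (metis index_vec index_zero_vec(1))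
qed

lemma orthogonal_codewords_imp_orthogonal_codeword:
  assumes "eligible_generator N T A"
    and "S \<subseteq> {..<N}" "card S = N - T"
    and "\<forall>h\<in>S. ip N0 z (codeword (N - T) A x h) = 0"
  shows "ip N0 z (codeword (N - T) A x i) = 0"
  using orthogonal_codewords_imp_orthogonal_messages[OF assms] by (simp add: ip_codeword)

lemma eq_codeword_if_adjacent_to_correct:
  fixes N T :: nat and A x ybar :: "nat \<Rightarrow> nat \<Rightarrow> int"
  defines "y \<equiv> codeword (N - T) A x"
  assumes elig: "eligible_generator N T A"
    and loop: "sadj N0 y ybar i i"
    and S: "S \<subseteq> {..<N}" "N - T \<le> card S"
    and S_correct: "\<forall>h\<in>S. \<forall>k<N0. ybar h k = y h k"
    and adj: "\<forall>h\<in>S. sadj N0 y ybar i h"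
  shows "\<forall>k<N0. ybar i k = y i k"
proof -
  obtain S' where S': "S' \<subseteq> S" "card S' = N - T"
    using S(2) obtain_subset_with_card_n by metis
  define z where "z k = ybar i k - y i k" for k
  have "ip N0 z (y h) = 0" if "h \<in> S'" for h
  proof -
    have "ip N0 (ybar i) (y h) = ip N0 (ybar i) (ybar h)"
      using S_correct S'(1) that by (intro ip_cong) auto
    also have "\<dots> = ip N0 (y i) (y h)" using adj S'(1) that unfolding sadj_def by blast
    finally show ?thesis unfolding z_def ip_diff_left by simp
  qed
  then have z_y: "ip N0 z (y i) = 0"
    using orthogonal_codewords_imp_orthogonal_codeword[OF elig _ S'(2)] S S'(1)
    unfolding y_def by blast
  have "ip N0 z z = ip N0 (ybar i) (ybar i) - ip N0 (y i) (y i) - 2 * ip N0 z (y i)"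
    unfolding z_def ip_def by (simp add: sum_subtractf sum.distrib sum_distrib_left algebra_simps)
  also have "\<dots> = 0" using loop z_y unfolding sadj_def by simp
  finally have "\<forall>k<N0. z k = 0" by (rule ip_self_eq_0_imp_zero)
  then show ?thesis unfolding z_def by simp
qed

lemma mult_le_square_div_4:
  fixes u v T :: nat
  assumes "u + v \<le> T"
  shows "u * v \<le> T^2 div 4"
proof -
  have "4 * (int u * int v) \<le> (int u + int v)^2"
    using zero_le_power2[of "int u - int v"] by (simp add: power2_eq_square algebra_simps)
  then have "4 * (u * v) \<le> (u + v)^2" by (simp flip: of_nat_mult of_nat_add of_nat_power)
  also have "\<dots> \<le> T^2" using assms by (rule power_mono) simp
  finally show ?thesis by linarith
qed

lemma greedy_excess_le:
  fixes b m d T :: nat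
  assumes "m \<le> b" "b \<le> T" "1 \<le> d" "d \<le> m"
  shows "(d - 1) + (m - d) * max (T - b + 1) (d - 1) \<le> T^2 div 4"
proof (cases "d - 1 \<le> T - b + 1")
  case True
  then have "(d - 1) + (m - d) * max (T - b + 1) (d - 1) \<le> ((d - 1) + (m - d)) * (T - b + 1)"
    by (simp add: add_mult_distrib)
  also have "\<dots> \<le> (b - 1) * (T - b + 1)" using assms by (intro mult_le_mono1) linarith
  also have "\<dots> \<le> T^2 div 4" using assms by (intro mult_le_square_div_4) linarith
  finally show ?thesis .
next
  case False
  then have "(d - 1) + (m - d) * max (T - b + 1) (d - 1) = (d - 1) * (m - d + 1)"
    by (simp add: algebra_simps)
  also have "\<dots> \<le> T^2 div 4" using assms by (intro mult_le_square_div_4) linarith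
  finally show ?thesis .
qed

locale greedy_cover =
  fixes M :: "'a set" and D :: "'a \<Rightarrow> 'a set" and U W :: "'a \<Rightarrow> 'b set" and s :: nat
  assumes finite_M: "finite M"
    and finite_W: "\<And>c. c \<in> M \<Longrightarrow> finite (W c)"
    and D_subset: "\<And>c. c \<in> M \<Longrightarrow> D c \<subseteq> M"
    and self_in_D: "\<And>c. c \<in> M \<Longrightarrow> c \<in> D c"
    and card_W_le: "\<And>c. c \<in> M \<Longrightarrow> card (W c) \<le> s + card (D c)"
    and U_subset_W: "\<And>c c'. c \<in> M \<Longrightarrow> c' \<in> D c \<Longrightarrow> U c' \<subseteq> W c"
    and card_U_ge: "\<And>c. c \<in> M \<Longrightarrow> s + 1 \<le> card (U c)"
begin

lemma finite_U: "c \<in> M \<Longrightarrow> finite (U c)"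
  using U_subset_W self_in_D finite_W by (meson finite_subset)

lemma finite_D: "c \<in> M \<Longrightarrow> finite (D c)"
  using D_subset finite_M by (meson finite_subset)

text \<open>The cost of covering step \<open>c\<close> beyond the already covered set \<open>Y\<close>, charged to the
  indices \<open>R \<inter> D c\<close> it removes. If \<open>D c\<close> meets an index already removed, \<open>W c\<close> contains
  that index's \<open>s + 1\<close> covered points, leaving at most \<open>d - 1\<close> new ones.\<close>

lemma card_W_diff_le:
  assumes R: "R \<subseteq> M" "c \<in> R" and covered: "\<And>c'. c' \<in> M - R \<Longrightarrow> U c' \<subseteq> Y"
    and d: "\<forall>c\<in>M. card (D c) \<le> d"
  shows "card (W c - Y) \<le> card (R \<inter> D c) * max (s + 1) (d - 1)"
proof -
  have cM: "c \<in> M" using R by blast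
  have one_le: "1 \<le> card (R \<inter> D c)"
    using R self_in_D[OF cM] finite_D[OF cM] by (simp add: Suc_le_eq card_gt_0_iff) blast
  show ?thesis
  proof (cases "D c \<subseteq> R")
    case True
    then have "card (W c - Y) \<le> s + card (R \<inter> D c)"
      using card_W_le[OF cM] finite_W[OF cM] card_mono[of "W c" "W c - Y"]
      by (simp add: Int_absorb1 Int_commute)
    also have "\<dots> \<le> card (R \<inter> D c) * (s + 1)" using one_le
      by (simp add: algebra_simps)
    also have "\<dots> \<le> card (R \<inter> D c) * max (s + 1) (d - 1)" by (rule mult_le_mono2) simp
    finally show ?thesis .
  next
    case False
    then obtain c' where c': "c' \<in> D c" "c' \<notin> R" by blast
    then have c'M: "c' \<in> M" using D_subset[OF cM] by blast
    have "card (W c - Y) \<le> card (W c - U c')"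
      using covered[of c'] c' c'M finite_W[OF cM] by (intro card_mono) auto
    also have "\<dots> = card (W c) - card (U c')"
      using U_subset_W[OF cM c'(1)] finite_U[OF c'M] by (simp add: card_Diff_subset)
    also have "\<dots> \<le> d - 1" using card_W_le[OF cM] card_U_ge[OF c'M] d cM by fastforce
    also have "\<dots> \<le> card (R \<inter> D c) * max (s + 1) (d - 1)" using one_le
      by (metis le_trans max.cobounded2 mult_1 mult_le_mono1)
    finally show ?thesis .
  qed
qed

lemma card_Union_diff_le:
  assumes "R \<subseteq> M" and "\<And>c. c \<in> M - R \<Longrightarrow> U c \<subseteq> Y" and d: "\<forall>c\<in>M. card (D c) \<le> d"
  shows "card ((\<Union>c\<in>R. U c) - Y) \<le> card R * max (s + 1) (d - 1)"
  using assms(1,2)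
proof (induction "card R" arbitrary: R Y rule: less_induct)
  case less
  let ?mx = "max (s + 1) (d - 1)"
  show ?case
  proof (cases "R = {}")
    case False
    then obtain c where cR: "c \<in> R" by blast
    have cM: "c \<in> M" using cR less.prems(1) by blast
    have finR: "finite R" using less.prems(1) finite_M finite_subset by blast
    let ?R' = "R - D c"
    have card_split: "card R = card (R \<inter> D c) + card ?R'"
      using finR by (rule card_Int_Diff)
    have "card ?R' < card R"
      using cR self_in_D[OF cM] finR by (intro psubset_card_mono) auto
    then have IH: "card ((\<Union>c\<in>?R'. U c) - (Y \<union> W c)) \<le> card ?R' * ?mx"
      using less.prems U_subset_W[OF cM] by (intro less.hyps) auto
    have "(\<Union>c\<in>R. U c) - Y \<subseteq> (W c - Y) \<union> ((\<Union>c\<in>?R'. U c) - (Y \<union> W c))"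
      using U_subset_W[OF cM] by blast
    moreover have "finite (\<Union>c\<in>?R'. U c)"
      using finite_U finR less.prems(1) by auto
    ultimately have "card ((\<Union>c\<in>R. U c) - Y)
        \<le> card (W c - Y) + card ((\<Union>c\<in>?R'. U c) - (Y \<union> W c))"
      using finite_W[OF cM] by (meson card_Un_le card_mono finite_Diff finite_UnI le_trans)
    also have "\<dots> \<le> card (R \<inter> D c) * ?mx + card ?R' * ?mx"
      using card_W_diff_le[OF less.prems(1) cR less.prems(2) d] IH by linarith
    finally show ?thesis using card_split by (simp add: add_mult_distrib)
  qed simp
qed

text \<open>Start the greedy covering at an index with the largest \<open>D\<close>.\<close>

lemma card_Union_le:
  assumes "M \<noteq> {}"
  obtains d where "1 \<le> d" "d \<le> card M"
    and "card (\<Union>c\<in>M. U c) \<le> s + d + (card M - d) * max (s + 1) (d - 1)"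
proof -
  define d where "d = Max ((\<lambda>c. card (D c)) ` M)"
  have d_max: "\<forall>c\<in>M. card (D c) \<le> d" unfolding d_def using finite_M by simp
  have "d \<in> (\<lambda>c. card (D c)) ` M" unfolding d_def using finite_M assms by (intro Max_in) auto
  then obtain c0 where c0: "c0 \<in> M" "card (D c0) = d" by blast
  have "1 \<le> d" unfolding c0(2)[symmetric] using self_in_D[OF c0(1)] finite_D[OF c0(1)]
    by (simp add: Suc_le_eq card_gt_0_iff) blast
  have card_rest: "card (M - D c0) = card M - d"
    unfolding c0(2)[symmetric] using D_subset[OF c0(1)] finite_D[OF c0(1)]
    by (simp add: card_Diff_subset)
  have "card (\<Union>c\<in>M. U c) \<le> card (W c0 \<union> ((\<Union>c\<in>M - D c0. U c) - W c0))"
    using U_subset_W[OF c0(1)] finite_W[OF c0(1)] finite_M finite_U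
    by (intro card_mono) auto
  also have "\<dots> \<le> card (W c0) + card ((\<Union>c\<in>M - D c0. U c) - W c0)" by (rule card_Un_le)
  also have "\<dots> \<le> s + d + (card M - d) * max (s + 1) (d - 1)"
    using card_W_le[OF c0(1)] card_Union_diff_le[of "M - D c0" "W c0" d] U_subset_W[OF c0(1)]
      d_max c0(2) card_rest by fastforce
  finally show ?thesis
    using that \<open>1 \<le> d\<close> card_mono[OF finite_M D_subset[OF c0(1)]] c0(2) by blast
qed

end

locale polytope_decoding =
  fixes N T N0 :: nat and A x ybar :: "nat \<Rightarrow> nat \<Rightarrow> int" and E :: "nat set"
  assumes eligible: "eligible_generator N T A"
    and E_subset: "E \<subseteq> {..<N}" and card_E: "card E \<le> T"
    and correct_outside_E: "\<forall>i<N. i \<notin> E \<longrightarrow> (\<forall>k<N0. ybar i k = codeword (N - T) A x i k)"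
begin

abbreviation y :: "nat \<Rightarrow> nat \<Rightarrow> int" where "y \<equiv> codeword (N - T) A x"

abbreviation adj :: "nat \<Rightarrow> nat \<Rightarrow> bool" where "adj \<equiv> sadj N0 y ybar"

abbreviation V_hat :: "nat set" where "V_hat \<equiv> hatV N N0 y ybar"

abbreviation V' :: "nat set" where "V' \<equiv> Vprime N T N0 y ybar"

abbreviation V_star :: "nat set" where "V_star \<equiv> Vstar N T N0 y ybar"

definition good :: "nat set" where "good = {i. i < N \<and> (\<forall>k<N0. ybar i k = y i k)}"

abbreviation missed :: "nat \<Rightarrow> nat set" where "missed c \<equiv> {h \<in> good. \<not> adj c h}"

definition bad :: "nat set" where "bad = {..<N} - good"

lemma T_le_N: "T \<le> N"
  using eligible unfolding eligible_generator_def by blast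

lemma finite_good: "finite good"
  unfolding good_def by simp

lemma finite_bad: "finite bad"
  unfolding bad_def by simp

lemma card_bad_le: "card bad \<le> T"
proof -
  have "bad \<subseteq> E" using correct_outside_E unfolding bad_def good_def by auto
  then show ?thesis using card_E E_subset by (meson card_mono finite_lessThan finite_subset le_trans)
qed

lemma card_good: "card good = N - card bad"
proof -
  have "good \<subseteq> {..<N}" unfolding good_def by blast
  then have "card good \<le> N" using card_mono[of "{..<N}" good] by simp
  with \<open>good \<subseteq> {..<N}\<close> show ?thesis unfolding bad_def by (simp add: card_Diff_subset finite_good)
qed

lemma adj_good: "i \<in> good \<Longrightarrow> j \<in> good \<Longrightarrow> adj i j"
  unfolding good_def sadj_def by (auto intro: ip_cong)

lemma good_subset_Vprime: "good \<subseteq> V'"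
proof -
  have "good \<subseteq> V_hat" using adj_good unfolding hatV_def good_def by auto
  moreover have "N - T \<le> card good" using card_good card_bad_le by linarith
  ultimately show ?thesis
    unfolding Vprime_def is_clique_def using adj_good by blast
qed

lemma Vprime_subset_hatV: "V' \<subseteq> V_hat"
  unfolding Vprime_def by blast

lemma good_if_adjacent_to_good:
  assumes "i \<in> V_hat" "S \<subseteq> good" "N - T \<le> card S" "\<forall>h\<in>S. adj i h"
  shows "i \<in> good"
  using eq_codeword_if_adjacent_to_correct[OF eligible] assms
  unfolding hatV_def good_def by blast

lemma Vstar_subset_good: "V_star \<subseteq> good"
proof
  fix i assume "i \<in> V_star"
  then show "i \<in> good"
    using good_subset_Vprime Vprime_subset_hatV card_good card_bad_le
    by (intro good_if_adjacent_to_good[of i good]) (auto simp: Vstar_def)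
qed

lemma card_missed_by_bad_ge:
  assumes "c \<in> V_hat" "c \<in> bad"
  shows "T - card bad + 1 \<le> card (missed c)"
proof -
  have "card {h \<in> good. adj c h} < N - T"
    using good_if_adjacent_to_good[OF assms(1), of "{h \<in> good. adj c h}"] assms(2)
    unfolding bad_def by fastforce
  moreover have "card (missed c) = card good - card {h \<in> good. adj c h}"
    using finite_good by (subst card_Diff_subset[symmetric]) (auto intro: arg_cong[where f = card])
  ultimately show ?thesis using card_good card_bad_le T_le_N by linarith
qed

definition clique_through :: "nat \<Rightarrow> nat set" where
  "clique_through c = (SOME C. is_clique N N0 y ybar C \<and> N - T \<le> card C \<and> c \<in> C)"

lemma clique_through:
  assumes "c \<in> V'"
  shows "is_clique N N0 y ybar (clique_through c)" "N - T \<le> card (clique_through c)"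
    "c \<in> clique_through c"
  using someI_ex[of "\<lambda>C. is_clique N N0 y ybar C \<and> N - T \<le> card C \<and> c \<in> C"] assms
  unfolding clique_through_def Vprime_def by blast+

lemma clique_through_subset_Vprime:
  assumes "c \<in> V'"
  shows "clique_through c \<subseteq> V'"
proof -
  have "clique_through c \<subseteq> V_hat"
    using clique_through(1)[OF assms] unfolding is_clique_def by blast
  then show ?thesis using clique_through[OF assms] unfolding Vprime_def by blast
qed

lemma card_clique_through_split:
  assumes "c \<in> V'"
  shows "card (clique_through c) = card (clique_through c \<inter> bad) + card (clique_through c \<inter> good)"
proof -
  have "clique_through c \<subseteq> {..<N}"
    using clique_through_subset_Vprime[OF assms] Vprime_subset_hatV unfolding hatV_def by blast
  then have "clique_through c = (clique_through c \<inter> bad) \<union> (clique_through c \<inter> good)"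
    unfolding bad_def by blast
  moreover have "finite (clique_through c)" using \<open>clique_through c \<subseteq> {..<N}\<close> finite_subset by blast
  then have "card ((clique_through c \<inter> bad) \<union> (clique_through c \<inter> good))
      = card (clique_through c \<inter> bad) + card (clique_through c \<inter> good)"
    by (intro card_Un_disjoint) (auto simp: bad_def)
  ultimately show ?thesis by simp
qed

lemma card_good_outside_clique_le:
  assumes "c \<in> V'"
  shows "card (good - clique_through c) \<le> T - card bad + card (clique_through c \<inter> bad)"
proof -
  have "card (good - clique_through c) = card good - card (clique_through c \<inter> good)"
    using finite_good by (simp add: card_Diff_subset_Int Int_commute)
  then show ?thesis
    using card_clique_through_split[OF assms] clique_through(2)[OF assms] card_good card_bad_le
      T_le_N by linarith
qed

lemma missed_subset_outside_clique:
  assumes "c \<in> V'" "c' \<in> clique_through c \<inter> bad"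
  shows "missed c' \<subseteq> good - clique_through c"
proof -
  have clique: "adj i j" if "i \<in> clique_through c" "j \<in> clique_through c" "i \<noteq> j" for i j
    using clique_through(1)[OF assms(1)] that unfolding is_clique_def by simp
  have "c' \<notin> good" using assms(2) unfolding bad_def by simp
  then show ?thesis using clique[of c'] assms(2) by blast
qed

lemma greedy_cover_missed:
  "greedy_cover (bad \<inter> V') (\<lambda>c. clique_through c \<inter> bad)
     (\<lambda>c. missed c) (\<lambda>c. good - clique_through c) (T - card bad)"
proof (rule greedy_cover.intro)
  fix c assume c: "c \<in> bad \<inter> V'"
  then show "clique_through c \<inter> bad \<subseteq> bad \<inter> V'"
    using clique_through_subset_Vprime by blast
  show "c \<in> clique_through c \<inter> bad" using clique_through(3) c by blast
  show "T - card bad + 1 \<le> card (missed c)"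
    using card_missed_by_bad_ge c Vprime_subset_hatV by blast
  show "card (good - clique_through c) \<le> T - card bad + card (clique_through c \<inter> bad)"
    using card_good_outside_clique_le c by blast
  show "missed c' \<subseteq> good - clique_through c" if "c' \<in> clique_through c \<inter> bad" for c'
    using missed_subset_outside_clique c that by blast
qed (simp_all add: finite_bad finite_good)

lemma card_missed_le:
  "card (\<Union>c\<in>bad \<inter> V'. missed c) \<le> T - card bad + 1 + T^2 div 4"
proof (cases "bad \<inter> V' = {}")
  case False
  interpret greedy_cover "bad \<inter> V'" "\<lambda>c. clique_through c \<inter> bad"
    "\<lambda>c. missed c" "\<lambda>c. good - clique_through c" "T - card bad"
    by (rule greedy_cover_missed)
  have "card (bad \<inter> V') \<le> card bad" by (simp add: card_mono finite_bad)
  obtain d where d: "1 \<le> d" "d \<le> card (bad \<inter> V')"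
    and card_le: "card (\<Union>c\<in>bad \<inter> V'. missed c)
      \<le> T - card bad + d + (card (bad \<inter> V') - d) * max (T - card bad + 1) (d - 1)"
    by (rule card_Union_le[OF False])
  have "card (bad \<inter> V') \<le> card bad" by (simp add: card_mono finite_bad)
  then have "(d - 1) + (card (bad \<inter> V') - d) * max (T - card bad + 1) (d - 1) \<le> T^2 div 4"
    using d by (intro greedy_excess_le card_bad_le)
  with card_le d(1) show ?thesis by linarith
qed simp

lemma Vstar_covers_unmissed:
  "good - (\<Union>c\<in>bad \<inter> V'. missed c) \<subseteq> V_star"
proof
  fix h assume h: "h \<in> good - (\<Union>c\<in>bad \<inter> V'. missed c)"
  have "adj h j" if "j \<in> V'" for j
  proof (cases "j \<in> good")
    case False
    then have "j \<in> bad" using that Vprime_subset_hatV unfolding hatV_def bad_def by blast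
    then show ?thesis using h that sadj_commute by blast
  qed (use h adj_good in blast)
  then show "h \<in> V_star" using h good_subset_Vprime unfolding Vstar_def by blast
qed

lemma card_Vstar_ge: "N - T - T^2 div 4 - 1 \<le> card (V_star)"
proof -
  let ?missed = "\<Union>c\<in>bad \<inter> V'. missed c"
  have "card good - card ?missed \<le> card (good - ?missed)"
    by (rule diff_card_le_card_Diff) (auto intro: finite_subset[OF _ finite_good])
  also have "\<dots> \<le> card (V_star)"
    using Vstar_covers_unmissed Vstar_subset_good finite_good
    by (meson card_mono finite_subset)
  finally show ?thesis using card_missed_le card_good card_bad_le by linarith
qed

end

theorem theorem2:
  fixes N T N0 :: nat
    and A :: "nat \<Rightarrow> nat \<Rightarrow> int"
    and x :: "nat \<Rightarrow> nat \<Rightarrow> int"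
    and ybar :: "nat \<Rightarrow> nat \<Rightarrow> int"
    and E :: "nat set"
  assumes "N0 \<ge> 1"
    and "T \<ge> 1"
    and "N \<ge> T + T^2 div 4 + 2"
    and "eligible_generator N T A"
    and "E \<subseteq> {..<N}" and "card E \<le> T"
    and "\<forall>i<N. i \<notin> E \<longrightarrow> (\<forall>k<N0. ybar i k = codeword (N - T) A x i k)"
  shows "card (Vstar N T N0 (codeword (N - T) A x) ybar) \<ge> N - T - T^2 div 4 - 1
       \<and> (\<forall>i \<in> Vstar N T N0 (codeword (N - T) A x) ybar.
             \<forall>k<N0. ybar i k = codeword (N - T) A x i k)"
proof -
  interpret polytope_decoding N T N0 A x ybar E
    using assms(4-7) by unfold_locales
  show ?thesis using card_Vstar_ge Vstar_subset_good unfolding good_def by blast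
qed

end
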